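(* Let $k:\mathbb R\to[0,\infty)$ be continuous with $\int_{\mathbb R}k(x)\,dx=1$, satisfying (K1) there is $\lambda>0$ with $\int_{\mathbb R}k(x)e^{\lambda|x|}dx<+\infty$, and (K2) $k(x_1)>0$, $k(x_2)>0$ for some $x_1>0$, $x_2<0$. Let $f\in C^1([0,1])$ satisfy $f(0)=f(1)=0$, $f(u)>0$ for $u\in(0,1)$, $f'(0)>0$ and $f(u)\leqslant f'(0)u$ for $u\in(0,1)$. Let $u_0\in C(\mathbb R)$ with $0\leqslant u_0\leqslant 1$, and let $u(t,x)$ be the solution of \[ u_t(t,x)=\int_{\mathbb R}k(x-y)u(t,y)\,dy-u(t,x)+f(u(t,x)),\ t>0,\ x\in\mathbb R,\qquad u(0,x)=u_0(x). \] If, for some $x_1\in\mathbb R$, both $k(\cdot)$ and $u_0(\cdot+x_1)$ are symmetric (even) and decreasing on $\mathbb R^+$, then for every $t>0$ the function $u(t,\cdot+x_1)$ is symmetric and decreasing on $\mathbb R^+$.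
   Context: "Decreasing on $\mathbb R^+$" for a function $g$ means $g(x)\geqslant g(y)$ whenever $0\leqslant x\leqslant y$. *)

theory Defs
  imports "HOL-Analysis.Analysis"
begin

definition sym_decr :: "(real \<Rightarrow> real) \<Rightarrow> bool" where
  "sym_decr g \<longleftrightarrow> (\<forall>x. g (- x) = g x) \<and> (\<forall>x y. 0 \<le> x \<and> x \<le> y \<longrightarrow> g y \<le> g x)"

definition is_solution ::
  "(real \<Rightarrow> real) \<Rightarrow> (real \<Rightarrow> real) \<Rightarrow> (real \<Rightarrow> real) \<Rightarrow> (real \<Rightarrow> real \<Rightarrow> real) \<Rightarrow> bool" where
  "is_solution k f u0 u \<longleftrightarrow>
     continuous_on ({0..} \<times> UNIV) (\<lambda>(t, x). u t x) \<and>
     (\<forall>t\<ge>0. \<forall>x. 0 \<le> u t x \<and> u t x \<le> 1) \<and>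
     (\<forall>x. u 0 x = u0 x) \<and>
     (\<forall>t>0. \<forall>x. (\<lambda>y. k (x - y) * u t y) integrable_on UNIV \<and>
        ((\<lambda>s. u s x) has_real_derivative
           (integral UNIV (\<lambda>y. k (x - y) * u t y) - u t x + f (u t x))) (at t))"

end

theory Submission
  imports Defs
begin

text \<open>Fix a reflection point \<open>m\<close> and a half-line \<open>R\<close> bounded by \<open>m\<close>. The gap
  \<open>u(t, 2m - x) - u(t, x)\<close> on \<open>R\<close> satisfies a linear nonlocal differential inequality,
  because \<open>k\<close> is even and decreasing and \<open>f\<close> is Lipschitz; a maximum-principle argument on
  successive short time intervals shows that it stays nonnegative once it is so at \<open>t = 0\<close>.
  Reflecting at \<open>m = x\<^sub>1\<close> from both sides gives the symmetry of \<open>u(t, \<cdot> + x\<^sub>1)\<close>, and reflecting at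
  \<open>m = x\<^sub>1 + (x + y)/2\<close>, which swaps \<open>x\<^sub>1 + x\<close> and \<open>x\<^sub>1 + y\<close>, gives its monotonicity.\<close>

lemma sym_decr_abs_mono:
  assumes "sym_decr g" "\<bar>p\<bar> \<le> \<bar>q\<bar>"
  shows "g q \<le> g p"
proof -
  have "g x = g \<bar>x\<bar>" for x
    using assms(1) unfolding sym_decr_def by (cases "0 \<le> x") (auto simp: abs_if)
  then show ?thesis
    using assms unfolding sym_decr_def by (metis abs_ge_zero)
qed

lemma has_integral_reflect_shift_UNIV:
  fixes g :: "real \<Rightarrow> 'b::banach"
  assumes g: "(g has_integral i) UNIV"
  shows "((\<lambda>x. g (c - x)) has_integral i) UNIV"
proof -
  have on_interval: "((\<lambda>x. g (c - x)) has_integral integral {c-b..c-a} g) {a..b}" for a b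
  proof -
    have "g integrable_on {c-b..c-a}"
      using g by (metis has_integral_integrable integrable_on_subinterval subset_UNIV)
    then have "((\<lambda>x. g (- x)) has_integral integral {c-b..c-a} g) {-(c-a)..-(c-b)}"
      using has_integral_reflect_real has_integral_integral by blast
    then have "((\<lambda>x. g (- x)) has_integral integral {c-b..c-a} g) {a + (-c)..b + (-c)}"
      by simp
    then have "(((\<lambda>x. g (- x)) \<circ> (+) (-c)) has_integral integral {c-b..c-a} g) {a..b}"
      using has_integral_shift_Icc_real by blast
    then show ?thesis
      by (simp add: o_def)
  qed
  show ?thesis
    unfolding has_integral_alt'
  proof (intro conjI allI impI)
    fix a b :: real
    show "(\<lambda>x. if x \<in> UNIV then g (c - x) else 0) integrable_on cbox a b"
      using on_interval[where a=a and b=b] by (auto simp: integrable_on_def)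
  next
    fix e :: real
    assume "e > 0"
    then obtain B where "B > 0"
      and B: "\<And>a b. ball 0 B \<subseteq> cbox a b \<Longrightarrow> norm (integral (cbox a b) g - i) < e"
      using g unfolding has_integral_alt' by auto
    show "\<exists>B'>0. \<forall>a b. ball 0 B' \<subseteq> cbox a b \<longrightarrow>
            norm (integral (cbox a b) (\<lambda>x. if x \<in> UNIV then g (c - x) else 0) - i) < e"
    proof (intro exI[of _ "B + \<bar>c\<bar>"] conjI allI impI)
      fix a b :: real
      assume big: "ball 0 (B + \<bar>c\<bar>) \<subseteq> cbox a b"
      have "ball 0 B \<subseteq> cbox (c - b) (c - a)"
      proof
        fix y :: real
        assume "y \<in> ball 0 B"
        then have "c - y \<in> cbox a b"
          using big by (auto simp: dist_real_def subset_iff)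
        then show "y \<in> cbox (c - b) (c - a)"
          by auto
      qed
      then show "norm (integral (cbox a b) (\<lambda>x. if x \<in> UNIV then g (c - x) else 0) - i) < e"
        using B on_interval[where a=a and b=b] by (simp add: integral_unique)
    qed (use \<open>B > 0\<close> in simp)
  qed
qed

text \<open>With \<open>x' = 2m - x\<close> and \<open>y' = 2m - y\<close>, the reflection \<open>y \<mapsto> y'\<close> turns the integral of
  \<open>(k(x - y) - k(x' - y)) (v y' - v y)\<close> into twice the difference of the two convolutions.
  As \<open>k\<close> is even and decreasing, \<open>k(x - y) \<ge> k(x' - y)\<close> exactly when \<open>y\<close> lies on the side of \<open>x\<close>,
  so the integrand is bounded below by \<open>-N (k(x - y) + k(x' - y))\<close>.\<close>

lemma convolution_reflection_lower_bound:
  fixes k v :: "real \<Rightarrow> real" and R :: "real set"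
  assumes k_nonneg: "\<And>x. 0 \<le> k x" and k_int: "(k has_integral 1) UNIV" and k_sym: "sym_decr k"
    and same_side: "\<And>x y. x \<in> R \<Longrightarrow> y \<in> R \<Longrightarrow> 0 \<le> (x - m) * (y - m)"
    and covers: "\<And>y. y \<in> R \<or> 2 * m - y \<in> R"
    and gap: "\<And>y. y \<in> R \<Longrightarrow> - N \<le> v (2 * m - y) - v y" and "0 \<le> N"
    and int: "(\<lambda>y. k (x - y) * v y) integrable_on UNIV"
    and int': "(\<lambda>y. k (2 * m - x - y) * v y) integrable_on UNIV"
    and "x \<in> R"
  shows "- N \<le> integral UNIV (\<lambda>y. k (2 * m - x - y) * v y) - integral UNIV (\<lambda>y. k (x - y) * v y)"
proof -
  define x' where "x' = 2 * m - x"
  define I where "I = integral UNIV (\<lambda>y. k (x - y) * v y)"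
  define I' where "I' = integral UNIV (\<lambda>y. k (x' - y) * v y)"
  define g where "g y = k (x - y) * v y - k (x' - y) * v y" for y
  define h where "h y = (k (x - y) - k (x' - y)) * (v (2 * m - y) - v y)" for y
  have k_even: "k (- z) = k z" for z
    using k_sym unfolding sym_decr_def by blast
  have g: "(g has_integral (I - I')) UNIV"
    unfolding g_def I_def I'_def x'_def using int int' by (intro has_integral_diff integrable_integral)
  have "h y = - g y - g (2 * m - y)" for y
    using k_even[of "x - (2 * m - y)"] k_even[of "x' - (2 * m - y)"]
    unfolding h_def g_def x'_def by (simp add: algebra_simps)
  then have "h = (\<lambda>y. - g y - g (2 * m - y))"
    by (rule ext)
  then have h: "(h has_integral 2 * (I' - I)) UNIV"
    using has_integral_diff[OF has_integral_neg[OF g] has_integral_reflect_shift_UNIV[OF g, of "2 * m"]]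
    by (simp add: algebra_simps)
  have k_sum: "((\<lambda>y. - N * (k (x - y) + k (x' - y))) has_integral - N * 2) UNIV"
    using has_integral_add[OF has_integral_reflect_shift_UNIV[OF k_int]
        has_integral_reflect_shift_UNIV[OF k_int]]
    by (intro has_integral_mult_right) simp
  have h_on_side: "- N * (k (x - y) + k (x' - y)) \<le> h y" if "y \<in> R" for y
  proof -
    have "(x - y)\<^sup>2 \<le> (x' - y)\<^sup>2"
      using same_side[OF \<open>x \<in> R\<close> that] unfolding x'_def by (simp add: power2_eq_square algebra_simps)
    then have "\<bar>x - y\<bar> \<le> \<bar>x' - y\<bar>"
      by (simp only: abs_le_square_iff)
    then have "k (x' - y) \<le> k (x - y)"
      by (rule sym_decr_abs_mono[OF k_sym])
    then have "(k (x - y) - k (x' - y)) * - N \<le> h y"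
      unfolding h_def using gap[OF that] by (intro mult_left_mono) auto
    moreover have "0 \<le> N * k (x' - y)"
      using k_nonneg \<open>0 \<le> N\<close> by simp
    ultimately show ?thesis
      by (simp add: algebra_simps)
  qed
  have h_lower: "- N * (k (x - y) + k (x' - y)) \<le> h y" for y
  proof (cases "y \<in> R")
    case False
    then have "2 * m - y \<in> R"
      using covers by blast
    moreover have "h (2 * m - y) = h y" "k (x - (2 * m - y)) = k (x' - y)" "k (x' - (2 * m - y)) = k (x - y)"
      using k_even[of "x - (2 * m - y)"] k_even[of "x' - (2 * m - y)"]
      unfolding h_def x'_def by (simp_all add: algebra_simps)
    ultimately show ?thesis
      using h_on_side[of "2 * m - y"] by (simp add: add.commute)
  qed (rule h_on_side)
  have "- N * 2 \<le> 2 * (I' - I)"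
    using has_integral_le[OF k_sum h h_lower] .
  then show ?thesis
    unfolding I_def I'_def x'_def by simp
qed

context
  fixes k f u0 :: "real \<Rightarrow> real" and u :: "real \<Rightarrow> real \<Rightarrow> real" and L :: real
  assumes sol: "is_solution k f u0 u"
    and k_nonneg: "\<And>x. 0 \<le> k x" and k_int: "(k has_integral 1) UNIV" and k_sym: "sym_decr k"
    and f_lip: "L-lipschitz_on {0..1} f"
begin

lemma solution_range: "0 \<le> t \<Longrightarrow> 0 \<le> u t x \<and> u t x \<le> 1"
  using sol unfolding is_solution_def by blast

lemma solution_integrable: "0 < t \<Longrightarrow> (\<lambda>y. k (x - y) * u t y) integrable_on UNIV"
  using sol unfolding is_solution_def by blast

lemma solution_has_derivative:
  "0 < t \<Longrightarrow> ((\<lambda>s. u s x) has_real_derivative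
      integral UNIV (\<lambda>y. k (x - y) * u t y) - u t x + f (u t x)) (at t)"
  using sol unfolding is_solution_def by blast

lemma continuous_on_solution: "continuous_on {0..} (\<lambda>t. u t x)"
proof -
  have "continuous_on {0..} ((\<lambda>(t, x). u t x) \<circ> (\<lambda>t. (t, x)))"
    using sol unfolding is_solution_def
    by (intro continuous_on_compose continuous_intros) (auto elim: continuous_on_subset)
  then show ?thesis
    by (simp add: o_def)
qed

context
  fixes m :: real and R :: "real set"
  assumes same_side: "\<And>x y. x \<in> R \<Longrightarrow> y \<in> R \<Longrightarrow> 0 \<le> (x - m) * (y - m)"
    and covers: "\<And>y. y \<in> R \<or> 2 * m - y \<in> R"
begin

text \<open>The weight \<open>exp ((1 + L) t)\<close> absorbs the term \<open>-u\<close> of the equation and leaves the reaction term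
  \<open>L (P - Q) + f P - f Q\<close>, which is nonnegative where the gap \<open>P - Q\<close> is.\<close>

lemma weighted_gap_derivative_lower_bound:
  assumes "0 < s" "x \<in> R" "0 \<le> N"
    and below: "\<And>y. y \<in> R \<Longrightarrow> - N \<le> exp ((1 + L) * s) * (u s (2 * m - y) - u s y)"
  shows "\<exists>l. ((\<lambda>r. exp ((1 + L) * r) * (u r (2 * m - x) - u r x)) has_real_derivative l) (at s)
           \<and> - (1 + 2 * L) * N \<le> l"
proof -
  define E where "E = exp ((1 + L) * s)"
  define P where "P = u s (2 * m - x)"
  define Q where "Q = u s x"
  define J where "J = integral UNIV (\<lambda>y. k (x - y) * u s y)"
  define J' where "J' = integral UNIV (\<lambda>y. k (2 * m - x - y) * u s y)"
  have "E > 0"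
    unfolding E_def by simp
  have d': "((\<lambda>r. u r (2 * m - x)) has_real_derivative J' - P + f P) (at s)"
    and d: "((\<lambda>r. u r x) has_real_derivative J - Q + f Q) (at s)"
    using solution_has_derivative[OF \<open>0 < s\<close>] unfolding J_def J'_def P_def Q_def by auto
  have "((\<lambda>r. exp ((1 + L) * r) * (u r (2 * m - x) - u r x)) has_real_derivative
      exp ((1 + L) * s) * (1 + L) * (u s (2 * m - x) - u s x)
        + exp ((1 + L) * s) * ((J' - P + f P) - (J - Q + f Q))) (at s)"
    by (auto intro!: derivative_eq_intros d' d)
  then have deriv: "((\<lambda>r. exp ((1 + L) * r) * (u r (2 * m - x) - u r x)) has_real_derivative
      E * (J' - J) + E * (L * (P - Q) + f P - f Q)) (at s)"
    by (rule DERIV_cong) (simp add: E_def P_def Q_def algebra_simps)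
  have "- (N / E) \<le> J' - J"
    unfolding J_def J'_def
  proof (rule convolution_reflection_lower_bound[OF k_nonneg k_int k_sym same_side covers])
    fix y
    assume "y \<in> R"
    then show "- (N / E) \<le> u s (2 * m - y) - u s y"
      using below \<open>E > 0\<close> unfolding E_def by (simp add: field_simps)
  qed (use \<open>0 \<le> N\<close> \<open>E > 0\<close> \<open>x \<in> R\<close> solution_integrable[OF \<open>0 < s\<close>] in auto)
  then have convolution: "- N \<le> E * (J' - J)"
    using \<open>E > 0\<close> by (simp add: field_simps)
  have lip: "\<bar>f P - f Q\<bar> \<le> L * \<bar>P - Q\<bar>"
    using lipschitz_onD[OF f_lip] solution_range \<open>0 < s\<close> unfolding P_def Q_def dist_real_def
    by (simp add: less_imp_le)
  have "0 \<le> L"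
    using lipschitz_on_nonneg[OF f_lip] .
  have reaction: "- (2 * L) * N \<le> E * (L * (P - Q) + f P - f Q)"
  proof (cases "Q \<le> P")
    case True
    then have "0 \<le> E * (L * (P - Q) + f P - f Q)"
      using lip \<open>E > 0\<close> by (simp add: abs_le_iff)
    moreover have "- (2 * L) * N \<le> 0"
      using \<open>0 \<le> L\<close> \<open>0 \<le> N\<close> by simp
    ultimately show ?thesis
      by linarith
  next
    case False
    then have "E * (2 * L * (P - Q)) \<le> E * (L * (P - Q) + f P - f Q)"
      using lip \<open>E > 0\<close> by (intro mult_left_mono) (auto simp: abs_le_iff algebra_simps)
    moreover have "2 * L * - N \<le> 2 * L * (E * (P - Q))"
      using below[OF \<open>x \<in> R\<close>] \<open>0 \<le> L\<close> unfolding E_def P_def Q_def by (intro mult_left_mono) auto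
    ultimately show ?thesis
      by (simp add: algebra_simps)
  qed
  show ?thesis
    using deriv convolution reaction
    by (intro exI[of _ "E * (J' - J) + E * (L * (P - Q) + f P - f Q)"]) (simp add: algebra_simps)
qed

text \<open>If \<open>-N\<close> is the infimum of the weighted gap over a time interval of length \<open>1 / (2 + 4 L)\<close>
  starting where the gap is nonnegative, the derivative bound keeps the gap above \<open>-N / 2\<close>
  on that interval, which forces \<open>N = 0\<close>.\<close>

lemma reflected_gap_step:
  assumes "0 \<le> t0" and start: "\<And>y. y \<in> R \<Longrightarrow> u t0 y \<le> u t0 (2 * m - y)"
    and t: "t0 \<le> t" "t \<le> t0 + 1 / (2 + 4 * L)" and "x \<in> R"
  shows "u t x \<le> u t (2 * m - x)"
proof -
  define T where "T = t0 + 1 / (2 + 4 * L)"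
  define \<phi> where "\<phi> r y = exp ((1 + L) * r) * (u r (2 * m - y) - u r y)" for r y
  define S where "S = {- \<phi> r y | r y. r \<in> {t0..T} \<and> y \<in> R} \<union> {0}"
  define N where "N = Sup S"
  have "0 \<le> L"
    using lipschitz_on_nonneg[OF f_lip] .
  have "bdd_above S"
  proof (rule bdd_aboveI)
    fix v
    assume "v \<in> S"
    moreover have "- \<phi> r y \<le> exp ((1 + L) * T)" if "r \<in> {t0..T}" for r y
    proof -
      have "- \<phi> r y = exp ((1 + L) * r) * (u r y - u r (2 * m - y))"
        unfolding \<phi>_def by (simp add: algebra_simps)
      also have "\<dots> \<le> exp ((1 + L) * r) * 1"
        using solution_range[of r y] solution_range[of r "2 * m - y"] that \<open>0 \<le> t0\<close>
        by (intro mult_left_mono) auto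
      also have "\<dots> \<le> exp ((1 + L) * T)"
        using that \<open>0 \<le> L\<close> by (simp add: mult_left_mono)
      finally show ?thesis .
    qed
    ultimately show "v \<le> exp ((1 + L) * T)"
      unfolding S_def by auto
  qed
  then have N_upper: "- \<phi> r y \<le> N" if "r \<in> {t0..T}" "y \<in> R" for r y
    unfolding N_def S_def using that by (intro cSup_upper) auto
  have "0 \<le> N"
    unfolding N_def S_def using \<open>bdd_above S\<close> by (intro cSup_upper) (auto simp: S_def)
  have half: "- \<phi> r y \<le> N / 2" if "r \<in> {t0..T}" "y \<in> R" for r y
  proof -
    have "\<phi> t0 y + (1 + 2 * L) * N * t0 \<le> \<phi> r y + (1 + 2 * L) * N * r"
    proof (rule DERIV_nonneg_imp_increasing_open[where f = "\<lambda>r. \<phi> r y + (1 + 2 * L) * N * r"])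
      fix r'
      assume "t0 < r'" "r' < r"
      then have "0 < r'"
        using \<open>0 \<le> t0\<close> by linarith
      have "- N \<le> exp ((1 + L) * r') * (u r' (2 * m - y') - u r' y')" if "y' \<in> R" for y'
        using N_upper[of r' y'] that \<open>t0 < r'\<close> \<open>r' < r\<close> \<open>r \<in> {t0..T}\<close> unfolding \<phi>_def by auto
      then obtain l where "((\<lambda>r. \<phi> r y) has_real_derivative l) (at r')" "- (1 + 2 * L) * N \<le> l"
        using weighted_gap_derivative_lower_bound[OF \<open>0 < r'\<close> \<open>y \<in> R\<close> \<open>0 \<le> N\<close>]
        unfolding \<phi>_def by blast
      then show "\<exists>l'. ((\<lambda>r. \<phi> r y + (1 + 2 * L) * N * r) has_real_derivative l') (at r') \<and> 0 \<le> l'"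
        by (intro exI[of _ "l + (1 + 2 * L) * N"]) (auto intro!: derivative_eq_intros simp: algebra_simps)
    next
      show "continuous_on {t0..r} (\<lambda>r. \<phi> r y + (1 + 2 * L) * N * r)"
        unfolding \<phi>_def using \<open>0 \<le> t0\<close>
        by (intro continuous_intros continuous_on_subset[OF continuous_on_solution]) auto
    qed (use \<open>r \<in> {t0..T}\<close> in simp)
    moreover have "0 \<le> \<phi> t0 y"
      using start[OF \<open>y \<in> R\<close>] unfolding \<phi>_def by simp
    moreover have "(1 + 2 * L) * N * (r - t0) \<le> N / 2"
    proof -
      have "(1 + 2 * L) * N * (r - t0) \<le> (1 + 2 * L) * N * (1 / (2 + 4 * L))"
        using that \<open>0 \<le> L\<close> \<open>0 \<le> N\<close> unfolding T_def by (intro mult_left_mono) auto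
      also have "\<dots> = N / 2"
        using \<open>0 \<le> L\<close> by (simp add: field_simps)
      finally show ?thesis .
    qed
    moreover have "(1 + 2 * L) * N * (r - t0) = (1 + 2 * L) * N * r - (1 + 2 * L) * N * t0"
      by (simp add: right_diff_distrib)
    ultimately show ?thesis
      by linarith
  qed
  have "Sup S \<le> N / 2"
    using half \<open>0 \<le> N\<close> unfolding S_def by (intro cSup_least) auto
  then have "N \<le> 0"
    by (simp add: N_def)
  then have "0 \<le> \<phi> t x"
    using N_upper[of t x] \<open>x \<in> R\<close> t unfolding T_def by simp
  then show ?thesis
    unfolding \<phi>_def by (simp add: zero_le_mult_iff)
qed

lemma reflected_gap_nonneg:
  assumes init: "\<And>y. y \<in> R \<Longrightarrow> u0 y \<le> u0 (2 * m - y)" and "0 \<le> t" "x \<in> R"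
  shows "u t x \<le> u t (2 * m - x)"
proof -
  define \<delta> where "\<delta> = 1 / (2 + 4 * L)"
  have "0 < \<delta>"
    using lipschitz_on_nonneg[OF f_lip] unfolding \<delta>_def by simp
  have "u t x \<le> u t (2 * m - x)" if "0 \<le> t" "t \<le> real n * \<delta>" "x \<in> R" for n t x
    using that
  proof (induction n arbitrary: t x)
    case 0
    then show ?case
      using init sol unfolding is_solution_def by simp
  next
    case (Suc n)
    show ?case
    proof (cases "t \<le> real n * \<delta>")
      case True
      then show ?thesis
        using Suc by blast
    next
      case False
      show ?thesis
      proof (rule reflected_gap_step[of "real n * \<delta>"])
        show "t \<le> real n * \<delta> + 1 / (2 + 4 * L)"
        proof -
          have "real (Suc n) * \<delta> = real n * \<delta> + \<delta>"
            by (simp add: algebra_simps)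
          then show ?thesis
            using Suc.prems unfolding \<delta>_def by linarith
        qed
      qed (use Suc False \<open>0 < \<delta>\<close> in auto)
    qed
  qed
  moreover obtain n where "t \<le> real n * \<delta>"
    using ex_less_of_nat_mult[OF \<open>0 < \<delta>\<close>] less_imp_le by blast
  ultimately show ?thesis
    using assms by blast
qed

end

lemma sym_decr_solution:
  assumes u0_sym: "sym_decr (\<lambda>x. u0 (x + c))" and "0 \<le> t"
  shows "sym_decr (\<lambda>x. u t (x + c))"
proof -
  have u0_mirror: "u0 (2 * c - y) = u0 y" for y
  proof -
    have "u0 (- (y - c) + c) = u0 (y - c + c)"
      using u0_sym unfolding sym_decr_def by blast
    moreover have "- (y - c) + c = 2 * c - y"
      by simp
    ultimately show ?thesis
      by simp
  qed
  have u0_reflect: "u0 z \<le> u0 (2 * m - z)" if "c \<le> m" "m \<le> z" for m z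
    using sym_decr_abs_mono[OF u0_sym, of "2 * m - z - c" "z - c"] that by simp
  have right: "u t y \<le> u t (2 * m - y)" if "\<And>z. m \<le> z \<Longrightarrow> u0 z \<le> u0 (2 * m - z)" "m \<le> y" for m y
  proof (rule reflected_gap_nonneg[where R = "{m..}" and m = m])
    show "0 \<le> (x - m) * (z - m)" if "x \<in> {m..}" "z \<in> {m..}" for x z
      using that by simp
  qed (use that \<open>0 \<le> t\<close> in auto)
  have gap: "u t y \<le> u t (2 * c - y)" for y
  proof (cases "c \<le> y")
    case True
    then show ?thesis
      using right[of c y] u0_reflect[of c] by simp
  next
    case False
    show ?thesis
    proof (rule reflected_gap_nonneg[where R = "{..c}" and m = c])
      show "0 \<le> (x - c) * (z - c)" if "x \<in> {..c}" "z \<in> {..c}" for x z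
        using that by (simp add: mult_nonpos_nonpos)
    qed (use False \<open>0 \<le> t\<close> u0_mirror in auto)
  qed
  have mirror: "u t (2 * c - y) = u t y" for y
    using gap[of y] gap[of "2 * c - y"] by simp
  have decreasing: "u t (y + c) \<le> u t (x + c)" if "0 \<le> x" "x \<le> y" for x y
  proof -
    define m where "m = c + (x + y) / 2"
    have "u t (y + c) \<le> u t (2 * m - (y + c))"
      using that by (intro right u0_reflect) (auto simp: m_def)
    also have "2 * m - (y + c) = x + c"
      by (simp add: m_def field_simps)
    finally show ?thesis .
  qed
  have "u t (- x + c) = u t (x + c)" for x
    using mirror[of "x + c"] by simp
  then show ?thesis
    unfolding sym_decr_def using decreasing by blast
qed

end

lemma continuous_derivative_imp_lipschitz_on:
  fixes f f' :: "real \<Rightarrow> real"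
  assumes "compact S" and "convex S"
    and deriv: "\<And>x. x \<in> S \<Longrightarrow> (f has_real_derivative f' x) (at x within S)"
    and cont: "continuous_on S f'"
  shows "\<exists>L. L-lipschitz_on S f"
proof -
  obtain B where B: "\<And>x. x \<in> S \<Longrightarrow> \<bar>f' x\<bar> \<le> B"
    using compact_imp_bounded[OF compact_continuous_image[OF cont \<open>compact S\<close>]]
    by (auto simp: bounded_real)
  have "lipschitz_on (max B 0) S f"
  proof (rule bounded_derivative_imp_lipschitz[of S f "\<lambda>x. (*) (f' x)"])
    fix x
    assume "x \<in> S"
    then show "(f has_derivative (*) (f' x)) (at x within S)"
      using deriv by (simp add: has_field_derivative_def)
    show "onorm ((*) (f' x)) \<le> max B 0"
      using B[OF \<open>x \<in> S\<close>] by (intro onorm_le) (auto simp: abs_mult intro: mult_right_mono)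
  qed (use \<open>convex S\<close> in auto)
  then show ?thesis ..
qed

theorem theorem2p5:
  fixes k f f' u0 :: "real \<Rightarrow> real" and u :: "real \<Rightarrow> real \<Rightarrow> real" and x1 :: real
  assumes k_cont: "continuous_on UNIV k"
    and k_nonneg: "\<And>x. k x \<ge> 0"
    and k_int: "(k has_integral 1) UNIV"
    and K1: "\<exists>lam>0. (\<lambda>x. k x * exp (lam * \<bar>x\<bar>)) integrable_on UNIV"
    and K2: "\<exists>a b. a > 0 \<and> b < 0 \<and> k a > 0 \<and> k b > 0"
    and f_deriv: "\<And>v. v \<in> {0..1} \<Longrightarrow> (f has_real_derivative f' v) (at v within {0..1})"
    and f'_cont: "continuous_on {0..1} f'"
    and f0: "f 0 = 0" and f1: "f 1 = 0"
    and f_pos: "\<And>v. 0 < v \<Longrightarrow> v < 1 \<Longrightarrow> f v > 0"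
    and f'0: "f' 0 > 0"
    and f_kpp: "\<And>v. 0 < v \<Longrightarrow> v < 1 \<Longrightarrow> f v \<le> f' 0 * v"
    and u0_cont: "continuous_on UNIV u0"
    and u0_range: "\<And>x. 0 \<le> u0 x \<and> u0 x \<le> 1"
    and sol: "is_solution k f u0 u"
    and k_sym: "sym_decr k"
    and u0_sym: "sym_decr (\<lambda>x. u0 (x + x1))"
  shows "\<forall>t>0. sym_decr (\<lambda>x. u t (x + x1))"
proof -
  obtain L where "L-lipschitz_on {0..1} f"
    using continuous_derivative_imp_lipschitz_on[OF _ _ f_deriv f'_cont] by auto
  then show ?thesis
    using sym_decr_solution[OF sol k_nonneg k_int k_sym _ u0_sym] by auto
qed

end
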